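(* Let $v(0)\in\mathcal N^*$, $v(0)\neq0$, and let $v(t)$ be the unique solution of the critical equations with initial condition $v(0)$, with $\Phi(t)=m_0(0)-m_0(t)$. Then, with $t_{gel}=1/m_1(0)$, $$\Phi(T)=\begin{cases}0& T\le t_{gel}\\ F_0(T)& T\ge t_{gel}\end{cases}\qquad\text{and}\qquad \int_0^T\Phi(t)dt=\begin{cases}0& T\le t_{gel}\\ G_0(T)& T\ge t_{gel}.\end{cases}$$
   Context: $\mathcal N$: sequences $v=(v_k)_{k\ge1}$ of nonnegative reals with $\sum_kv_k<\infty$; $\mathcal N^*$: those with finitely many nonzero terms; $m_0=\sum_kv_k$, $m_1=\sum_kkv_k$. Critical equations: $v(t)\in\mathcal N$ with $v_k(t)=v_k(0)+\int_0^t\big(\tfrac k2\sum_{l=1}^{k-1}v_lv_{k-l}-kv_km_0(s)\big)ds$ for all $k$, $m_0(0)-m_0(t)$ nondecreasing in $[0,m_0(0))$. Functions $F_0,G_0$ on $(0,\infty)$: for $x\in\mathbb R$ put $w(x):=\big(\sum_kkv_k(0)e^{-kx}\big)^{-1}$, a strictly increasing bijection $\mathbb R\to(0,\infty)$, and define $F_0(w(x)):=\sum_kv_k(0)(1-e^{-kx})$ and $G_0(w(x)):=w(x)F_0(w(x))-x$. (Equivalently, with $U_0(x)=\sum_kv_k(0)(e^{-kx}-1)$ and $X_0$ its inverse function, $F_0(-X_0'(u))=-u$ and $G_0(w)=-\min_u\{wu+X_0(u)\}$ is the Legendre transform.) *)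

theory Defs
  imports "HOL-Analysis.Analysis"
begin

(* Sequences v = (v_k)_{k>=1} are represented as functions nat => real; index 0 is ignored. *)

definition in_N :: "(nat \<Rightarrow> real) \<Rightarrow> bool" where
  "in_N v \<longleftrightarrow> (\<forall>k\<ge>1. v k \<ge> 0) \<and> summable (\<lambda>k. v (Suc k))"

definition in_Nstar :: "(nat \<Rightarrow> real) \<Rightarrow> bool" where
  "in_Nstar v \<longleftrightarrow> in_N v \<and> finite {k. k \<ge> 1 \<and> v k \<noteq> 0}"

definition m0 :: "(nat \<Rightarrow> real) \<Rightarrow> real" where
  "m0 v = (\<Sum>k. v (Suc k))"

definition m1 :: "(nat \<Rightarrow> real) \<Rightarrow> real" where
  "m1 v = (\<Sum>k. real (Suc k) * v (Suc k))"

definition critical_solution :: "(real \<Rightarrow> nat \<Rightarrow> real) \<Rightarrow> bool" where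
  "critical_solution v \<longleftrightarrow>
     (\<forall>t\<ge>0. in_N (v t)) \<and>
     (\<forall>t\<ge>0. \<forall>k\<ge>1.
        ((\<lambda>s. real k / 2 * (\<Sum>l=1..k-1. v s l * v s (k - l)) - real k * v s k * m0 (v s))
           has_integral (v t k - v 0 k)) {0..t}) \<and>
     mono_on {0..} (\<lambda>t. m0 (v 0) - m0 (v t)) \<and>
     (\<forall>t\<ge>0. m0 (v 0) - m0 (v t) \<in> {0..<m0 (v 0)})"

definition wfun :: "(nat \<Rightarrow> real) \<Rightarrow> real \<Rightarrow> real" where
  "wfun v0 x = inverse (\<Sum>k. real (Suc k) * v0 (Suc k) * exp (- real (Suc k) * x))"

definition winv :: "(nat \<Rightarrow> real) \<Rightarrow> real \<Rightarrow> real" where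
  "winv v0 T = (THE x. wfun v0 x = T)"

definition F0 :: "(nat \<Rightarrow> real) \<Rightarrow> real \<Rightarrow> real" where
  "F0 v0 T = (let x = winv v0 T in (\<Sum>k. v0 (Suc k) * (1 - exp (- real (Suc k) * x))))"

definition G0 :: "(nat \<Rightarrow> real) \<Rightarrow> real \<Rightarrow> real" where
  "G0 v0 T = T * F0 v0 T - winv v0 T"

end

theory Submission
  imports Defs
begin

text \<open>Let \<open>gen t z = \<Sum>\<^sub>k v\<^sub>k(t) e\<^sup>-\<^sup>k\<^sup>z\<close>. The critical equations say that \<open>gen\<close> solves the
  Burgers-type equation \<open>\<partial>\<^sub>t gen + (gen - m\<^sub>0(t)) \<partial>\<^sub>z gen = 0\<close> for \<open>z > 0\<close>, so \<open>gen t\<close> keeps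
  the value \<open>gen 0 x\<close> along the characteristic \<open>z(t) = x + t gen 0 x - \<integral>\<^sub>0\<^sup>t m\<^sub>0\<close> while it stays
  positive; since \<open>m\<^sub>0\<close> is merely monotone this is shown with one-sided derivatives and a Gronwall
  argument. No characteristic starting at \<open>x \<ge> 0\<close> ever becomes negative (look at the last start
  point whose characteristic does), whereas the one with \<open>gen 0 x = m\<^sub>0(T)\<close> has reached \<open>0\<close> by
  time \<open>T\<close>, because \<open>gen T z < m\<^sub>0(T)\<close> for \<open>z > 0\<close>. Hence
  \<open>\<integral>\<^sub>0\<^sup>T m\<^sub>0 = min\<^sub>x\<^sub>\<ge>\<^sub>0 (x + T gen 0 x)\<close>. For \<open>T m\<^sub>1(0) \<le> 1\<close> the minimum is at \<open>x = 0\<close> and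
  \<open>\<Phi>\<close> vanishes; otherwise the minimiser satisfies \<open>T = w(x)\<close> and the minimum is the Legendre
  transform that defines \<open>F\<^sub>0\<close> and \<open>G\<^sub>0\<close>.\<close>

lemma integral_has_real_derivative_at_right:
  fixes f :: "real \<Rightarrow> real"
  assumes fi: "f integrable_on {a..b}" and as: "a \<le> s" and sb: "s < b"
    and lim: "(f \<longlongrightarrow> L) (at_right s)"
  shows "((\<lambda>x. integral {a..x} f) has_real_derivative L) (at_right s)"
proof -
  \<comment> \<open>Redefine f at s by its right limit; this changes no integral but makes it right-continuous at s.\<close>
  define g where "g r = (if r = s then L else f r)" for r
  have fi2: "f integrable_on {s..b}"
    using integrable_subinterval_real[OF fi] as sb by auto
  have gi: "g integrable_on {s..b}"
    by (rule integrable_spike_finite[of "{s}" _ _ f]) (use fi2 in \<open>auto simp: g_def\<close>)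
  have ev: "eventually (\<lambda>r. f r = g r) (at_right s)"
    using eventually_at_right_less[of s] by eventually_elim (auto simp: g_def)
  have "(g \<longlongrightarrow> L) (at_right s)"
    using tendsto_cong[OF ev] lim by simp
  then have "continuous (at s within ({s..b} - {})) g"
    using sb by (simp add: continuous_within at_within_Icc_at_right g_def)
  from integral_has_vector_derivative_continuous_at[OF gi _ _ this] sb
  have "((\<lambda>u. integral {s..u} g) has_vector_derivative g s) (at s within ({s..b} - {}))"
    by auto
  then have d1: "((\<lambda>u. integral {s..u} g) has_real_derivative L) (at_right s)"
    using sb by (simp add: has_real_derivative_iff_has_vector_derivative at_within_Icc_at_right g_def)
  have d2: "((\<lambda>u. integral {a..s} f + integral {s..u} g) has_real_derivative L) (at_right s)"
    using DERIV_add[OF DERIV_const d1] by simp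
  have ev2: "eventually (\<lambda>u. integral {a..s} f + integral {s..u} g = integral {a..u} f) (at_right s)"
    using eventually_at_right_real[OF sb]
  proof eventually_elim
    case (elim u)
    have "integral {s..u} g = integral {s..u} f"
      by (rule integral_spike[of "{s}"]) (auto simp: g_def)
    moreover have "integral {a..s} f + integral {s..u} f = integral {a..u} f"
      using Henstock_Kurzweil_Integration.integral_combine[where a=a and c=s and b=u and f=f]
        integrable_subinterval_real[OF fi, of a u] as elim by auto
    ultimately show ?case by simp
  qed
  have "integral {a..s} f + integral {s..s} g = integral {a..s} f" by simp
  from has_field_derivative_cong_eventually[OF ev2 this] d2 show ?thesis by simp
qed

lemma right_derivative_nonpos_imp_below_slope:
  fixes f :: "real \<Rightarrow> real"
  assumes ab: "a \<le> b" and cont: "continuous_on {a..b} f"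
    and der: "\<And>x. x \<in> {a..<b} \<Longrightarrow> \<exists>D. (f has_real_derivative D) (at_right x) \<and> D \<le> 0"
    and e: "e > 0"
  shows "f b \<le> f a + e * (b - a)"
proof -
  \<comment> \<open>The largest point up to which f stays below the line of slope e is b.\<close>
  define S where "S = {x\<in>{a..b}. f x \<le> f a + e * (x - a)}"
  have aS: "a \<in> S" using ab by (simp add: S_def)
  have "S = {a..b} \<inter> (\<lambda>x. f x - e * (x - a)) -` {..f a}"
    by (auto simp: S_def algebra_simps)
  moreover have "closed ({a..b} \<inter> (\<lambda>x. f x - e * (x - a)) -` {..f a})"
    by (rule continuous_closed_preimage) (auto intro!: continuous_intros cont)
  ultimately have cS: "closed S" by simp
  have bdd: "bdd_above S" by (auto simp: S_def bdd_above_def)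
  define m where "m = Sup S"
  have mS: "m \<in> S" unfolding m_def using closed_contains_Sup[of S] aS cS bdd by auto
  have "m = b"
  proof (rule ccontr)
    assume "m \<noteq> b"
    with mS have mb: "m < b" "a \<le> m" by (auto simp: S_def)
    obtain D where D: "(f has_real_derivative D) (at_right m)" "D \<le> 0"
      using der[of m] mb by auto
    then have "((\<lambda>y. (f y - f m) / (y - m)) \<longlongrightarrow> D) (at_right m)"
      by (simp add: has_field_derivative_iff)
    then have "eventually (\<lambda>y. (f y - f m) / (y - m) < e) (at_right m)"
      using D(2) e by (auto simp: order_tendsto_iff)
    then obtain c where c: "c > m" "\<And>y. y > m \<Longrightarrow> y < c \<Longrightarrow> (f y - f m) / (y - m) < e"
      by (auto simp: eventually_at_right_field)
    define y where "y = min (m + (c - m)/2) b"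
    have y: "y > m" "y < c" "y \<le> b" using c mb by (auto simp: y_def min_def field_simps)
    have "f y - f m < e * (y - m)" using c(2)[OF y(1,2)] y(1) by (simp add: divide_less_eq)
    moreover have "f m \<le> f a + e * (m - a)" using mS by (simp add: S_def)
    ultimately have "y \<in> S" using y mb by (simp add: S_def algebra_simps)
    then have "y \<le> m" unfolding m_def by (rule cSup_upper[OF _ bdd])
    with y show False by simp
  qed
  with mS show ?thesis by (simp add: S_def)
qed

lemma decreasing_if_right_derivative_nonpos:
  fixes f :: "real \<Rightarrow> real"
  assumes ab: "a \<le> b" and cont: "continuous_on {a..b} f"
    and der: "\<And>x. x \<in> {a..<b} \<Longrightarrow> \<exists>D. (f has_real_derivative D) (at_right x) \<and> D \<le> 0"
  shows "f b \<le> f a"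
proof (rule field_le_epsilon)
  fix e :: real assume e: "0 < e"
  show "f b \<le> f a + e"
  proof (cases "a = b")
    case False
    with ab have "0 < b - a" by simp
    with right_derivative_nonpos_imp_below_slope[OF ab cont der, of "e / (b - a)"] e
    show ?thesis by simp
  qed (use e in simp)
qed

lemma linear_right_ode_stays_at_equilibrium:
  fixes Q D :: "real \<Rightarrow> real"
  assumes t: "0 \<le> t" and cont: "continuous_on {0..t} Q" and init: "Q 0 = u"
    and deriv: "\<And>s. s \<in> {0..<t} \<Longrightarrow> (Q has_real_derivative D s * (Q s - u)) (at_right s)"
    and bound: "\<And>s. s \<in> {0..<t} \<Longrightarrow> D s \<le> B"
  shows "Q t = u"
proof -
  define R where "R s = (Q s - u)^2 * exp (- (2 * B) * s)" for s
  have "R t \<le> R 0"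
  proof (rule decreasing_if_right_derivative_nonpos[OF t])
    show "continuous_on {0..t} R"
      unfolding R_def by (intro continuous_intros cont)
    fix s assume s: "s \<in> {0..<t}"
    have "(R has_real_derivative
           (2 * (Q s - u) * (D s * (Q s - u))) * exp (- (2 * B) * s)
           + exp (- (2 * B) * s) * (- (2 * B)) * (Q s - u)^2) (at_right s)"
      unfolding R_def[abs_def]
      by (rule DERIV_mult[OF _ DERIV_chain2[OF DERIV_exp]])
         (rule derivative_eq_intros deriv[OF s] refl | simp)+
    moreover have "(2 * (Q s - u) * (D s * (Q s - u))) * exp (- (2 * B) * s)
           + exp (- (2 * B) * s) * (- (2 * B)) * (Q s - u)^2
           = 2 * exp (- (2 * B) * s) * (Q s - u)^2 * (D s - B)"
      by (simp add: algebra_simps power2_eq_square)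
    moreover have "2 * exp (- (2 * B) * s) * (Q s - u)^2 * (D s - B) \<le> 0"
      using bound[OF s] by (intro mult_nonneg_nonpos) auto
    ultimately show "\<exists>D. (R has_real_derivative D) (at_right s) \<and> D \<le> 0" by auto
  qed
  then have "(Q t - u)^2 * exp (- (2 * B) * t) \<le> 0" by (simp add: R_def init)
  then show ?thesis by (simp add: mult_le_0_iff)
qed

lemma suminf_has_real_derivative_at_right:
  fixes f :: "nat \<Rightarrow> real \<Rightarrow> real"
  assumes deriv: "\<And>k. (f k has_real_derivative f' k) (at_right s)"
    and summable_at: "\<forall>\<^sub>F h in at_right s. summable (\<lambda>k. f k h)" "summable (\<lambda>k. f k s)"
    and bound: "\<forall>\<^sub>F h in at_right s. \<forall>k. \<bar>(f k h - f k s) / (h - s)\<bar> \<le> B k"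
    and "summable B"
  shows "((\<lambda>h. \<Sum>k. f k h) has_real_derivative (\<Sum>k. f' k)) (at_right s)"
proof -
  define q where "q k h = (f k h - f k s) / (h - s)" for k h
  have q_lim: "((\<lambda>h. q k h) \<longlongrightarrow> f' k) (at_right s)" for k
    using deriv[of k] unfolding has_field_derivative_iff q_def by simp
  have q_bound: "eventually (\<lambda>(k,h). norm (q k h) \<le> B k) (at_top \<times>\<^sub>F at_right s)"
    unfolding eventually_prod_filter
    by (intro exI[of _ "\<lambda>_. True"] exI[of _ "\<lambda>h. \<forall>k. \<bar>q k h\<bar> \<le> B k"])
       (use bound in \<open>auto simp: q_def\<close>)
  have lim: "((\<lambda>h. \<Sum>k. q k h) \<longlongrightarrow> (\<Sum>k. f' k)) (at_right s)"
    using tannerys_theorem[OF q_lim q_bound \<open>summable B\<close>] by simp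
  have "eventually (\<lambda>h. (\<Sum>k. q k h) = ((\<Sum>k. f k h) - (\<Sum>k. f k s)) / (h - s)) (at_right s)"
    using summable_at(1)
  proof eventually_elim
    case (elim h)
    show ?case unfolding q_def
      using suminf_diff[OF elim summable_at(2)] suminf_divide[OF summable_diff[OF elim summable_at(2)]]
      by simp
  qed
  then show ?thesis
    unfolding has_field_derivative_iff using tendsto_cong lim by fastforce
qed

lemma summable_Suc_times_power:
  fixes r :: real
  assumes "0 \<le> r" "r < 1"
  shows "summable (\<lambda>n. real (Suc n) * r ^ n)"
proof -
  have "summable (\<lambda>n. diffs (\<lambda>_. 1::real) n * r ^ n)"
    by (rule termdiff_converges[where K=1]) (use assms in \<open>auto intro!: summable_geometric\<close>)
  then show ?thesis by (simp add: diffs_def)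
qed

lemma summable_Suc_square_times_power:
  fixes r :: real
  assumes "0 \<le> r" "r < 1"
  shows "summable (\<lambda>k. real (Suc k) ^ 2 * r ^ Suc k)"
proof -
  have "summable (\<lambda>n. diffs (\<lambda>n. real (Suc n)) n * r ^ n)"
  proof (rule termdiff_converges[where K=1])
    fix x :: real assume x: "norm x < 1"
    have "summable (\<lambda>n. real (Suc n) * \<bar>x\<bar> ^ n)" using x by (intro summable_Suc_times_power) auto
    then have "summable (\<lambda>n. \<bar>real (Suc n) * x ^ n\<bar>)" by (simp add: abs_mult power_abs)
    then show "summable (\<lambda>n. real (Suc n) * x ^ n)" by (rule summable_rabs_cancel)
  qed (use assms in auto)
  then have s: "summable (\<lambda>n. real (Suc n) * real (Suc (Suc n)) * r ^ n)"
    by (simp add: diffs_def)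
  show ?thesis
  proof (rule summable_comparison_test'[OF s])
    fix n :: nat
    have "real (Suc n) * r \<le> real (Suc n)"
      using assms by (intro mult_left_le) auto
    then have "real (Suc n) * r \<le> real (Suc (Suc n))" by linarith
    then have "real (Suc n) * (real (Suc n) * r) * r ^ n \<le> real (Suc n) * real (Suc (Suc n)) * r ^ n"
      using assms by (intro mult_right_mono mult_left_mono) auto
    then show "norm (real (Suc n) ^ 2 * r ^ Suc n) \<le> real (Suc n) * real (Suc (Suc n)) * r ^ n"
      using assms by (simp add: power2_eq_square mult.assoc mult.left_commute)
  qed
qed

lemma exp_neg_of_nat_mult: "exp (- real n * z) = exp (- z) ^ n"
  using exp_of_nat_mult[of n "-z"] by simp

lemma exp_neg_of_nat_mult_le_1: "z \<ge> 0 \<Longrightarrow> exp (- real n * z) \<le> 1"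
  unfolding exp_neg_of_nat_mult by (rule power_le_one) auto

lemma exp_neg_of_nat_mult_less_1: "z > 0 \<Longrightarrow> exp (- real (Suc n) * z) < 1"
  unfolding exp_neg_of_nat_mult by (rule power_Suc_less_one) auto

lemma exp_neg_mult_diff_bound:
  fixes c a b eta :: real
  assumes "c \<ge> 0" "a \<ge> eta" "b \<ge> eta"
  shows "\<bar>exp (- c * a) - exp (- c * b)\<bar> \<le> c * exp (- c * eta) * \<bar>a - b\<bar>"
proof -
  have *: "exp (- c * a) - exp (- c * b) \<le> c * exp (- c * eta) * (b - a)"
    if "a \<le> b" "a \<ge> eta" for a b
  proof -
    have "exp (- c * a) - exp (- c * b) = exp (- c * a) * (1 - exp (- (c * (b - a))))"
      by (simp add: algebra_simps flip: exp_add)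
    also have "\<dots> \<le> exp (- c * a) * (c * (b - a))"
      using exp_ge_add_one_self[of "- (c * (b - a))"] by (intro mult_left_mono) auto
    also have "\<dots> \<le> exp (- c * eta) * (c * (b - a))"
      using that assms(1) by (intro mult_right_mono) (auto simp: mult_left_mono)
    finally show ?thesis by (simp add: algebra_simps)
  qed
  have anti: "exp (- c * b) \<le> exp (- c * a)" if "a \<le> b" for a b
    using that assms(1) by (simp add: mult_left_mono)
  show ?thesis
  proof (cases "a \<le> b")
    case True
    with *[OF True assms(2)] anti[OF True] show ?thesis by (simp add: abs_if)
  next
    case False
    with *[of b a] assms(3) anti[of b a] show ?thesis by (simp add: abs_if)
  qed
qed

lemma sum_convolution_weighted:
  fixes f :: "nat \<Rightarrow> real"
  shows "(\<Sum>i=1..n-1. real i * f i * f (n - i)) = real n / 2 * (\<Sum>l=1..n-1. f l * f (n - l))"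
proof -
  have r: "(\<Sum>i=1..n-1. real i * f i * f (n - i)) = (\<Sum>i=1..n-1. real (n - i) * f (n - i) * f i)"
    by (rule sum.reindex_bij_witness[where i="\<lambda>i. n - i" and j="\<lambda>i. n - i"]) auto
  have "2 * (\<Sum>i=1..n-1. real i * f i * f (n - i)) =
        (\<Sum>i=1..n-1. real i * f i * f (n - i)) + (\<Sum>i=1..n-1. real (n - i) * f (n - i) * f i)"
    using r by simp
  also have "\<dots> = (\<Sum>i=1..n-1. real n * (f i * f (n - i)))"
    unfolding sum.distrib[symmetric]
    by (rule sum.cong) (auto simp: of_nat_diff algebra_simps)
  also have "\<dots> = real n * (\<Sum>l=1..n-1. f l * f (n - l))" by (simp add: sum_distrib_left)
  finally show ?thesis by (simp add: field_simps)
qed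

locale critical_flow =
  fixes v :: "real \<Rightarrow> nat \<Rightarrow> real"
  assumes finite_support: "in_Nstar (v 0)"
    and nontrivial: "\<exists>k\<ge>1. v 0 k \<noteq> 0"
    and solution: "critical_solution v"
begin

abbreviation mass :: "real \<Rightarrow> real" where "mass s \<equiv> m0 (v s)"
abbreviation M :: real where "M \<equiv> m0 (v 0)"

definition gain :: "nat \<Rightarrow> real \<Rightarrow> real" where
  "gain k s = real k / 2 * (\<Sum>l=1..k-1. v s l * v s (k - l))"

definition rate :: "nat \<Rightarrow> real \<Rightarrow> real" where
  "rate k s = gain k s - real k * v s k * mass s"

lemma v_nonneg: "s \<ge> 0 \<Longrightarrow> k \<ge> 1 \<Longrightarrow> 0 \<le> v s k"
  using solution by (simp add: critical_solution_def in_N_def)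

lemma v_summable: "s \<ge> 0 \<Longrightarrow> summable (\<lambda>k. v s (Suc k))"
  using solution by (simp add: critical_solution_def in_N_def)

lemma mass_suminf: "mass s = (\<Sum>k. v s (Suc k))"
  by (simp add: m0_def)

lemma v_le_mass:
  assumes "s \<ge> 0" "k \<ge> 1"
  shows "v s k \<le> mass s"
proof -
  obtain j where j: "k = Suc j" using assms(2) by (cases k) auto
  have "sum (\<lambda>k. v s (Suc k)) {j} \<le> (\<Sum>k. v s (Suc k))"
    by (rule sum_le_suminf) (use v_summable[OF assms(1)] v_nonneg[OF assms(1)] in auto)
  then show ?thesis using j by (simp add: mass_suminf)
qed

lemma mass_pos: "s \<ge> 0 \<Longrightarrow> 0 < mass s"
  and mass_le_M: "s \<ge> 0 \<Longrightarrow> mass s \<le> M"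
  using solution by (auto simp: critical_solution_def)

lemma M_pos: "M > 0"
  using mass_pos[of 0] by simp

lemma mass_antimono: "0 \<le> a \<Longrightarrow> a \<le> b \<Longrightarrow> mass b \<le> mass a"
  using solution by (auto simp: critical_solution_def mono_on_def)

lemma v_le_M: "s \<ge> 0 \<Longrightarrow> k \<ge> 1 \<Longrightarrow> v s k \<le> M"
  using v_le_mass mass_le_M by fastforce

lemma rate_has_integral: "t \<ge> 0 \<Longrightarrow> k \<ge> 1 \<Longrightarrow> (rate k has_integral (v t k - v 0 k)) {0..t}"
  using solution unfolding critical_solution_def rate_def gain_def by blast

lemma rate_integrable: "0 \<le> a \<Longrightarrow> a \<le> b \<Longrightarrow> k \<ge> 1 \<Longrightarrow> rate k integrable_on {a..b}"
  using rate_has_integral[of b k] integrable_subinterval_real[of "rate k" 0 b a b] by auto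

lemma v_diff_eq_integral:
  assumes "0 \<le> a" "a \<le> b" "k \<ge> 1"
  shows "v b k - v a k = integral {a..b} (rate k)"
proof -
  have "integral {0..a} (rate k) + integral {a..b} (rate k) = integral {0..b} (rate k)"
    using Henstock_Kurzweil_Integration.integral_combine[where a=0 and c=a and b=b and f="rate k"]
      assms rate_integrable[of 0 b k] by auto
  moreover have "integral {0..a} (rate k) = v a k - v 0 k" using rate_has_integral[of a k] assms by auto
  moreover have "integral {0..b} (rate k) = v b k - v 0 k" using rate_has_integral[of b k] assms by auto
  ultimately show ?thesis by simp
qed

lemma gain_nonneg: "s \<ge> 0 \<Longrightarrow> 0 \<le> gain k s"
  unfolding gain_def by (intro mult_nonneg_nonneg sum_nonneg) (auto intro!: v_nonneg)

lemma gain_le: 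
  assumes "s \<ge> 0"
  shows "gain k s \<le> real k ^ 2 * M^2"
proof -
  have "(\<Sum>l=1..k-1. v s l * v s (k - l)) \<le> (\<Sum>l=1..k-1. M * M)"
    by (rule sum_mono) (use M_pos in \<open>auto intro!: mult_mono v_le_M v_nonneg assms\<close>)
  also have "\<dots> \<le> real k * M^2" using M_pos by (simp add: power2_eq_square mult_right_mono)
  finally have "gain k s \<le> real k / 2 * (real k * M^2)"
    unfolding gain_def by (rule mult_left_mono) simp
  also have "\<dots> \<le> real k ^ 2 * M^2" by (simp add: power2_eq_square)
  finally show ?thesis .
qed

lemma rate_abs_le:
  assumes "s \<ge> 0" "k \<ge> 1"
  shows "\<bar>rate k s\<bar> \<le> 2 * real k ^ 2 * M^2"
proof -
  have "real k * v s k * mass s \<le> real k * M * M"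
    using v_le_M[OF assms] mass_le_M[OF assms(1)] v_nonneg[OF assms] mass_pos[OF assms(1)]
    by (intro mult_mono) auto
  also have "\<dots> \<le> real k ^ 2 * M^2" using assms M_pos
    by (simp add: power2_eq_square mult_right_mono)
  moreover have "0 \<le> real k * v s k * mass s"
    using v_nonneg[OF assms] mass_pos[OF assms(1)] by simp
  ultimately show ?thesis
    using gain_nonneg[OF assms(1), of k] gain_le[OF assms(1), of k]
    by (simp add: rate_def abs_le_iff)
qed

lemma v_lipschitz:
  assumes "0 \<le> a" "a \<le> b" "k \<ge> 1"
  shows "\<bar>v b k - v a k\<bar> \<le> 2 * real k ^ 2 * M^2 * (b - a)"
proof -
  let ?C = "2 * real k ^ 2 * M^2"
  have i: "rate k integrable_on {a..b}" using rate_integrable assms by auto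
  have bound: "- ?C \<le> rate k x \<and> rate k x \<le> ?C" if "x \<in> {a..b}" for x
    using rate_abs_le[of x k] that assms by (simp add: abs_le_iff)
  have "integral {a..b} (rate k) \<le> integral {a..b} (\<lambda>_. ?C)"
    by (rule integral_le[OF i]) (use bound in auto)
  moreover have "integral {a..b} (\<lambda>_. - ?C) \<le> integral {a..b} (rate k)"
    by (rule integral_le[OF _ i]) (use bound in auto)
  ultimately show ?thesis using v_diff_eq_integral[OF assms] assms by (auto simp: abs_le_iff field_simps)
qed

lemma v_continuous: "k \<ge> 1 \<Longrightarrow> continuous_on {0..} (\<lambda>s. v s k)"
proof -
  assume k: "k \<ge> 1"
  have "(2 * real k ^ 2 * M^2)-lipschitz_on {0..} (\<lambda>s. v s k)"
  proof (rule lipschitz_onI)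
    fix x y :: real assume xy: "x \<in> {0..}" "y \<in> {0..}"
    show "dist (v x k) (v y k) \<le> 2 * real k ^ 2 * M^2 * dist x y"
      using v_lipschitz[of x y k] v_lipschitz[of y x k] xy k
      by (cases "x \<le> y") (auto simp: dist_real_def abs_minus_commute)
  qed simp
  then show ?thesis by (rule lipschitz_on_continuous_on)
qed

lemma mass_integrable: "0 \<le> a \<Longrightarrow> mass integrable_on {a..b}"
proof -
  assume a: "0 \<le> a"
  have "mono_on {a..b} (\<lambda>t. - mass t)"
    using mass_antimono a by (auto simp: mono_on_def)
  then have "(\<lambda>t. - mass t) integrable_on {a..b}" by (rule integrable_on_mono_on)
  then show ?thesis using integrable_neg by fastforce
qed

definition cum_mass :: "real \<Rightarrow> real" where
  "cum_mass t = integral {0..t} mass"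

lemma cum_mass_0 [simp]: "cum_mass 0 = 0"
  by (simp add: cum_mass_def)

lemma cum_mass_diff: "0 \<le> a \<Longrightarrow> a \<le> b \<Longrightarrow> cum_mass b - cum_mass a = integral {a..b} mass"
  unfolding cum_mass_def
  using Henstock_Kurzweil_Integration.integral_combine[where a=0 and c=a and b=b and f=mass]
    mass_integrable[of 0 b] by auto

lemma cum_mass_diff_bounds:
  assumes "0 \<le> a" "a \<le> b"
  shows "(b - a) * mass b \<le> cum_mass b - cum_mass a"
    and "cum_mass b - cum_mass a \<le> (b - a) * mass a"
proof -
  have "integral {a..b} (\<lambda>_. mass b) \<le> integral {a..b} mass"
    by (rule integral_le) (use mass_integrable assms mass_antimono in auto)
  then show "(b - a) * mass b \<le> cum_mass b - cum_mass a" using cum_mass_diff[OF assms] assms by simp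
  have "integral {a..b} mass \<le> integral {a..b} (\<lambda>_. mass a)"
    by (rule integral_le) (use mass_integrable assms mass_antimono in auto)
  then show "cum_mass b - cum_mass a \<le> (b - a) * mass a" using cum_mass_diff[OF assms] assms by simp
qed

lemma cum_mass_diff_le:
  assumes "0 \<le> a" "a \<le> b"
  shows "0 \<le> cum_mass b - cum_mass a" "cum_mass b - cum_mass a \<le> M * (b - a)"
proof -
  have "0 \<le> (b - a) * mass b" using mass_pos[of b] assms by simp
  then show "0 \<le> cum_mass b - cum_mass a"
    using cum_mass_diff_bounds(1)[OF assms] by linarith
  have "(b - a) * mass a \<le> M * (b - a)"
    using mass_le_M[of a] assms by (simp add: mult_right_mono mult.commute)
  then show "cum_mass b - cum_mass a \<le> M * (b - a)"
    using cum_mass_diff_bounds(2)[OF assms] by linarith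
qed

lemma cum_mass_continuous: "continuous_on {0..} cum_mass"
proof -
  have "M-lipschitz_on {0..} cum_mass"
  proof (rule lipschitz_onI)
    fix x y :: real assume xy: "x \<in> {0..}" "y \<in> {0..}"
    show "dist (cum_mass x) (cum_mass y) \<le> M * dist x y"
      using cum_mass_diff_le[of x y] cum_mass_diff_le[of y x] xy
      by (cases "x \<le> y") (auto simp: dist_real_def abs_minus_commute)
  qed (use M_pos in simp)
  then show ?thesis by (rule lipschitz_on_continuous_on)
qed

text \<open>The mass need not be continuous; only its right limits enter the equations along
  characteristics.\<close>
definition mass_right :: "real \<Rightarrow> real" where
  "mass_right s = Sup (mass ` {s<..})"

lemma mass_tendsto_mass_right:
  assumes s: "s \<ge> 0"
  shows "(mass \<longlongrightarrow> mass_right s) (at_right s)"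
proof -
  have bdd: "bdd_above (mass ` {s<..})"
    using mass_le_M s by (auto simp: bdd_above_def intro!: exI[of _ M])
  show ?thesis
  proof (rule order_tendstoI)
    fix a assume "a < mass_right s"
    then obtain r where r: "r > s" "a < mass r"
      using less_cSup_iff[of "mass ` {s<..}" a] bdd by (auto simp: mass_right_def)
    show "eventually (\<lambda>x. a < mass x) (at_right s)"
      unfolding eventually_at_right_field
      using r s mass_antimono by (intro exI[of _ r]) (auto intro: less_le_trans)
  next
    fix a assume "mass_right s < a"
    show "eventually (\<lambda>x. mass x < a) (at_right s)"
      using eventually_at_right_less[of s]
    proof eventually_elim
      case (elim x)
      then have "mass x \<le> mass_right s" unfolding mass_right_def by (intro cSup_upper[OF _ bdd]) auto
      then show ?case using \<open>mass_right s < a\<close> by simp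
    qed
  qed
qed

lemma cum_mass_right_derivative: "s \<ge> 0 \<Longrightarrow> (cum_mass has_real_derivative mass_right s) (at_right s)"
  unfolding cum_mass_def
  by (rule integral_has_real_derivative_at_right[OF mass_integrable[of 0 "s+1"]])
     (auto intro: mass_tendsto_mass_right)

lemma gain_continuous: "continuous_on {0..} (gain k)"
  unfolding gain_def
  by (intro continuous_intros continuous_on_sum ballI) (auto intro!: v_continuous)

lemma v_right_derivative:
  assumes s: "s \<ge> 0" and k: "k \<ge> 1"
  shows "((\<lambda>r. v r k) has_real_derivative (gain k s - real k * v s k * mass_right s)) (at_right s)"
proof -
  have "((\<lambda>r. gain k r) \<longlongrightarrow> gain k s) (at_right s)" "((\<lambda>r. v r k) \<longlongrightarrow> v s k) (at_right s)"
    using gain_continuous[of k] v_continuous[OF k] s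
    by (auto simp: continuous_on_def intro: tendsto_within_subset)
  then have "(rate k \<longlongrightarrow> gain k s - real k * v s k * mass_right s) (at_right s)"
    unfolding rate_def[abs_def] by (intro tendsto_intros mass_tendsto_mass_right s)
  from integral_has_real_derivative_at_right[OF rate_integrable[of 0 "s+1" k] _ _ this]
  have deriv: "((\<lambda>r. v 0 k + integral {0..r} (rate k)) has_real_derivative
          (gain k s - real k * v s k * mass_right s)) (at_right s)"
    using DERIV_add[OF DERIV_const] s k by auto
  have ev: "eventually (\<lambda>r. v 0 k + integral {0..r} (rate k) = v r k) (at_right s)"
    using eventually_at_right_less[of s]
  proof eventually_elim
    case (elim r)
    then show ?case using s k v_diff_eq_integral[of 0 r k] by simp
  qed
  have "v 0 k + integral {0..s} (rate k) = v s k"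
    using s k v_diff_eq_integral[of 0 s k] by simp
  from has_field_derivative_cong_eventually[OF ev this] deriv show ?thesis by simp
qed


definition gen :: "real \<Rightarrow> real \<Rightarrow> real" where
  "gen s z = (\<Sum>k. v s (Suc k) * exp (- real (Suc k) * z))"

text \<open>\<open>wgen s = - \<partial>\<^sub>z gen s\<close>; in particular \<open>wgen 0 0 = m1 (v 0)\<close> and \<open>wfun (v 0) = inverse \<circ> wgen 0\<close>.\<close>
definition wgen :: "real \<Rightarrow> real \<Rightarrow> real" where
  "wgen s z = (\<Sum>k. real (Suc k) * v s (Suc k) * exp (- real (Suc k) * z))"

lemma gen_term_le:
  assumes "s \<ge> 0" "z \<ge> eta"
  shows "\<bar>v s (Suc k) * exp (- real (Suc k) * z)\<bar> \<le> M * exp (- eta) ^ Suc k"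
proof -
  have "exp (- real (Suc k) * z) \<le> exp (- real (Suc k) * eta)"
    using assms(2) by (simp add: mult_left_mono)
  then have "exp (- real (Suc k) * z) \<le> exp (- eta) ^ Suc k"
    by (simp only: exp_neg_of_nat_mult)
  then show ?thesis using v_nonneg[OF assms(1), of "Suc k"] v_le_M[OF assms(1), of "Suc k"]
    by (simp add: abs_mult mult_mono)
qed

lemma gen_summable:
  assumes s: "s \<ge> 0" and z: "z > 0"
  shows "summable (\<lambda>k. v s (Suc k) * exp (- real (Suc k) * z))"
proof (rule summable_comparison_test')
  show "summable (\<lambda>k. M * exp (- z) ^ Suc k)"
    using z by (intro summable_mult summable_geometric[THEN summable_Suc_iff[THEN iffD2]]) auto
qed (use gen_term_le[OF s, of z z] in auto)

lemma wgen_term_le: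
  assumes "s \<ge> 0" "z \<ge> eta"
  shows "real (Suc k) * v s (Suc k) * exp (- real (Suc k) * z)
           \<le> M * (real (Suc k) ^ 2 * exp (- eta) ^ Suc k)"
proof -
  have "real (Suc k) * v s (Suc k) * exp (- real (Suc k) * z)
          \<le> real (Suc k) * (M * exp (- eta) ^ Suc k)"
    using gen_term_le[OF assms, of k] v_nonneg[OF assms(1), of "Suc k"]
    by (simp add: abs_mult mult.assoc mult_left_mono)
  also have "\<dots> \<le> real (Suc k) ^ 2 * (M * exp (- eta) ^ Suc k)"
    using M_pos by (intro mult_right_mono) (auto simp: power2_eq_square)
  finally show ?thesis by (simp add: algebra_simps)
qed

lemma wgen_summable:
  assumes s: "s \<ge> 0" and z: "z > 0"
  shows "summable (\<lambda>k. real (Suc k) * v s (Suc k) * exp (- real (Suc k) * z))"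
proof (rule summable_comparison_test')
  show "summable (\<lambda>k. M * (real (Suc k) ^ 2 * exp (- z) ^ Suc k))"
    using z by (intro summable_mult summable_Suc_square_times_power) auto
  show "norm (real (Suc k) * v s (Suc k) * exp (- real (Suc k) * z))
          \<le> M * (real (Suc k) ^ 2 * exp (- z) ^ Suc k)" for k
    using wgen_term_le[OF s, of z z k] v_nonneg[OF s, of "Suc k"] by simp
qed

lemma wgen_le:
  assumes "s \<ge> 0" "0 < eta" "eta \<le> z"
  shows "wgen s z \<le> M * (\<Sum>k. real (Suc k) ^ 2 * exp (- eta) ^ Suc k)"
proof -
  have "summable (\<lambda>k. real (Suc k) ^ 2 * exp (- eta) ^ Suc k)"
    using assms by (intro summable_Suc_square_times_power) auto
  then have "wgen s z \<le> (\<Sum>k. M * (real (Suc k) ^ 2 * exp (- eta) ^ Suc k))"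
    unfolding wgen_def using assms
    by (intro suminf_le wgen_term_le summable_mult wgen_summable) auto
  also have "\<dots> = M * (\<Sum>k. real (Suc k) ^ 2 * exp (- eta) ^ Suc k)"
    using \<open>summable _\<close> by (rule suminf_mult)
  finally show ?thesis .
qed

text \<open>The coagulation gain is a convolution, so its generating series factorises.\<close>
lemma gain_series_sums:
  assumes s: "s \<ge> 0" and z: "z > 0"
  shows "(\<lambda>k. gain (Suc k) s * exp (- real (Suc k) * z)) sums (wgen s z * gen s z)"
proof -
  define a where "a n = real n * v s n * exp (- real n * z)" for n
  define b where "b n = (if n = 0 then 0 else v s n * exp (- real n * z))" for n
  have "summable (\<lambda>n. a (Suc n))" using wgen_summable[OF s z] by (simp add: a_def)
  then have "a sums wgen s z"
    using summable_sums sums_Suc_iff[of a] by (fastforce simp: wgen_def a_def)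
  moreover have "summable (\<lambda>n. b (Suc n))" using gen_summable[OF s z] by (simp add: b_def)
  then have "b sums gen s z"
    using summable_sums sums_Suc_iff[of b] by (fastforce simp: gen_def b_def)
  moreover have "a n \<ge> 0" "b n \<ge> 0" for n
    using v_nonneg[OF s, of n] by (cases n; simp add: a_def b_def)+
  ultimately have cp: "(\<lambda>k. \<Sum>i\<le>k. a i * b (k - i)) sums (wgen s z * gen s z)"
    using Cauchy_product_sums[of a b] by (simp add: sums_iff)
  have "(\<Sum>i\<le>n. a i * b (n - i)) = gain n s * exp (- real n * z)" for n
  proof -
    have "(\<Sum>i\<le>n. a i * b (n - i)) = (\<Sum>i=1..n-1. a i * b (n - i))"
      by (rule sum.mono_neutral_right) (auto simp: a_def b_def)
    also have "\<dots> = (\<Sum>i=1..n-1. real i * v s i * v s (n - i)) * exp (- real n * z)"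
      unfolding sum_distrib_right
    proof (rule sum.cong[OF refl])
      fix i assume i: "i \<in> {1..n-1}"
      then have "real (n - i) = real n - real i" by (subst of_nat_diff) auto
      then have "exp (- real i * z) * exp (- real (n - i) * z) = exp (- real n * z)"
        by (simp add: algebra_simps flip: exp_add)
      then show "a i * b (n - i) = real i * v s i * v s (n - i) * exp (- real n * z)"
        using i by (auto simp: a_def b_def algebra_simps)
    qed
    also have "\<dots> = gain n s * exp (- real n * z)"
      unfolding gain_def sum_convolution_weighted ..
    finally show ?thesis .
  qed
  with cp have "(\<lambda>k. gain k s * exp (- real k * z)) sums (wgen s z * gen s z)" by simp
  then show ?thesis using sums_Suc_iff[of "\<lambda>k. gain k s * exp (- real k * z)"] by (simp add: gain_def)
qed

lemma gen_term_diff_le: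
  assumes s: "0 \<le> s" "s \<le> h" and eta: "eta \<le> y" "eta \<le> z" and yz: "\<bar>y - z\<bar> \<le> L * (h - s)"
  shows "\<bar>v h (Suc k) * exp (- real (Suc k) * y) - v s (Suc k) * exp (- real (Suc k) * z)\<bar>
           \<le> (2 * M^2 + M * L) * (real (Suc k) ^ 2 * exp (- eta) ^ Suc k) * (h - s)"
proof -
  let ?e = "\<lambda>z. exp (- real (Suc k) * z)" and ?r = "exp (- eta) ^ Suc k"
  have r: "exp (- real (Suc k) * eta) = ?r" by (rule exp_neg_of_nat_mult)
  have "?e y \<le> exp (- real (Suc k) * eta)"
    using eta(1) by (simp add: mult_left_mono)
  then have ey: "?e y \<le> ?r" by (simp only: r)
  have "\<bar>?e y - ?e z\<bar> \<le> real (Suc k) * ?r * \<bar>y - z\<bar>"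
    using exp_neg_mult_diff_bound[of "real (Suc k)" eta y z] eta by (simp only: r)
  also have "\<dots> \<le> real (Suc k) * ?r * (L * (h - s))"
    by (intro mult_left_mono yz) auto
  finally have ediff: "\<bar>?e y - ?e z\<bar> \<le> real (Suc k) * ?r * (L * (h - s))" .
  have vdiff: "\<bar>v h (Suc k) - v s (Suc k)\<bar> \<le> 2 * real (Suc k) ^ 2 * M^2 * (h - s)"
    using v_lipschitz[of s h "Suc k"] s by simp
  have "v h (Suc k) * ?e y - v s (Suc k) * ?e z
          = (v h (Suc k) - v s (Suc k)) * ?e y + v s (Suc k) * (?e y - ?e z)"
    by (simp add: algebra_simps)
  then have "\<bar>v h (Suc k) * ?e y - v s (Suc k) * ?e z\<bar>
      \<le> \<bar>v h (Suc k) - v s (Suc k)\<bar> * ?e y + v s (Suc k) * \<bar>?e y - ?e z\<bar>"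
    using v_nonneg[OF s(1), of "Suc k"] by (simp add: abs_mult abs_triangle_ineq[THEN order_trans])
  also have "\<dots> \<le> (2 * real (Suc k) ^ 2 * M^2 * (h - s)) * ?r
                 + M * (real (Suc k) * ?r * (L * (h - s)))"
    using vdiff ey ediff v_nonneg[OF s(1), of "Suc k"] v_le_M[OF s(1), of "Suc k"] s
    by (intro add_mono mult_mono) auto
  also have "\<dots> \<le> (2 * real (Suc k) ^ 2 * M^2 * (h - s)) * ?r
                 + M * (real (Suc k) ^ 2 * ?r * (L * (h - s)))"
    using M_pos yz by (intro add_left_mono mult_left_mono mult_right_mono)
      (auto simp: power2_eq_square)
  finally show ?thesis by (simp add: algebra_simps)
qed

lemma gen_along_path_continuous:
  assumes y: "continuous_on {a..b} y" and a: "0 \<le> a"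
    and eta: "0 < eta" "\<And>s. s \<in> {a..b} \<Longrightarrow> eta \<le> y s"
  shows "continuous_on {a..b} (\<lambda>s. gen s (y s))"
  unfolding gen_def
proof (rule uniform_limit_theorem)
  show "\<forall>\<^sub>F n in sequentially. continuous_on {a..b}
          (\<lambda>s. \<Sum>k<n. v s (Suc k) * exp (- real (Suc k) * y s))"
    using a by (intro always_eventually allI continuous_on_sum ballI continuous_intros
        continuous_on_subset[OF v_continuous] y) auto
  show "uniform_limit {a..b} (\<lambda>n s. \<Sum>k<n. v s (Suc k) * exp (- real (Suc k) * y s))
          (\<lambda>s. \<Sum>k. v s (Suc k) * exp (- real (Suc k) * y s)) sequentially"
  proof (rule Weierstrass_m_test)
    show "norm (v s (Suc k) * exp (- real (Suc k) * y s)) \<le> M * exp (- eta) ^ Suc k"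
      if "s \<in> {a..b}" for k s
      using gen_term_le[of s eta "y s" k] eta(2)[OF that] that a by simp
    show "summable (\<lambda>k. M * exp (- eta) ^ Suc k)"
      using eta by (intro summable_mult summable_geometric[THEN summable_Suc_iff[THEN iffD2]]) auto
  qed
qed simp

lemma gen_term_right_derivative:
  assumes s: "0 \<le> s" and yd: "(y has_real_derivative y') (at_right s)"
  shows "((\<lambda>h. v h (Suc k) * exp (- real (Suc k) * y h)) has_real_derivative
           gain (Suc k) s * exp (- real (Suc k) * y s)
           - (mass_right s + y') * (real (Suc k) * v s (Suc k) * exp (- real (Suc k) * y s))) (at_right s)"
proof -
  have "((\<lambda>h. v h (Suc k) * exp (- real (Suc k) * y h)) has_real_derivative
          (gain (Suc k) s - real (Suc k) * v s (Suc k) * mass_right s) * exp (- real (Suc k) * y s)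
          + v s (Suc k) * (exp (- real (Suc k) * y s) * (- real (Suc k) * y'))) (at_right s)"
    by (rule derivative_eq_intros v_right_derivative yd refl | use s in simp)+
  then show ?thesis by (simp add: algebra_simps)
qed

text \<open>With \<open>c\<close> the mass, this is the equation \<open>\<partial>\<^sub>t gen = - (gen - mass) \<partial>\<^sub>z gen\<close>.\<close>
lemma gen_time_derivative_series_sums:
  assumes s: "0 \<le> s" and z: "0 < z"
  shows "(\<lambda>k. gain (Suc k) s * exp (- real (Suc k) * z)
            - c * (real (Suc k) * v s (Suc k) * exp (- real (Suc k) * z)))
           sums (wgen s z * (gen s z - c))"
proof -
  have "(\<lambda>k. gain (Suc k) s * exp (- real (Suc k) * z)
            - c * (real (Suc k) * v s (Suc k) * exp (- real (Suc k) * z)))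
           sums (wgen s z * gen s z - c * wgen s z)"
    unfolding wgen_def using s z
    by (intro sums_diff gain_series_sums[unfolded wgen_def] sums_mult summable_sums wgen_summable) auto
  then show ?thesis by (simp add: algebra_simps)
qed

lemma gen_along_path_right_derivative:
  assumes s: "0 \<le> s" "s < t" and eta: "0 < eta" "\<And>h. h \<in> {s..t} \<Longrightarrow> eta \<le> y h"
    and lip: "\<And>h. h \<in> {s..t} \<Longrightarrow> \<bar>y h - y s\<bar> \<le> L * (h - s)"
    and yd: "(y has_real_derivative y') (at_right s)"
  shows "((\<lambda>h. gen h (y h)) has_real_derivative
           wgen s (y s) * (gen s (y s) - mass_right s - y')) (at_right s)"
proof -
  define f where "f k h = v h (Suc k) * exp (- real (Suc k) * y h)" for k h
  define f' where "f' k = gain (Suc k) s * exp (- real (Suc k) * y s)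
      - (mass_right s + y') * (real (Suc k) * v s (Suc k) * exp (- real (Suc k) * y s))" for k
  define B where "B k = (2 * M^2 + M * L) * (real (Suc k) ^ 2 * exp (- eta) ^ Suc k)" for k
  have ys: "0 < y s" using eta(1) eta(2)[of s] s by simp
  have "(f k has_real_derivative f' k) (at_right s)" for k
    unfolding f_def[abs_def] f'_def using gen_term_right_derivative[OF s(1) yd] .
  moreover have "\<forall>\<^sub>F h in at_right s. summable (\<lambda>k. f k h)"
    using eventually_at_right_real[OF s(2)]
  proof eventually_elim
    case (elim h)
    then show ?case
      unfolding f_def using s eta(1) eta(2)[of h] by (intro gen_summable) auto
  qed
  moreover have "summable (\<lambda>k. f k s)"
    unfolding f_def using s ys by (intro gen_summable) auto
  moreover have "\<forall>\<^sub>F h in at_right s. \<forall>k. \<bar>(f k h - f k s) / (h - s)\<bar> \<le> B k"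
    using eventually_at_right_real[OF s(2)]
  proof eventually_elim
    case (elim h)
    show ?case
    proof
      fix k
      have "\<bar>f k h - f k s\<bar> \<le> B k * (h - s)"
        unfolding f_def B_def using elim s
        by (intro gen_term_diff_le eta lip) auto
      then show "\<bar>(f k h - f k s) / (h - s)\<bar> \<le> B k"
        using elim by (simp add: abs_divide divide_le_eq)
    qed
  qed
  moreover have "summable B"
    unfolding B_def using eta by (intro summable_mult summable_Suc_square_times_power) auto
  ultimately have "((\<lambda>h. \<Sum>k. f k h) has_real_derivative (\<Sum>k. f' k)) (at_right s)"
    by (rule suminf_has_real_derivative_at_right)
  moreover have "(\<Sum>k. f' k) = wgen s (y s) * (gen s (y s) - (mass_right s + y'))"
    unfolding f'_def by (rule sums_unique[OF gen_time_derivative_series_sums[OF s(1) ys], symmetric])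
  ultimately show ?thesis by (simp add: f_def gen_def diff_diff_eq)
qed


lemma gen_tendsto_mass:
  assumes s: "s \<ge> 0"
  shows "(gen s \<longlongrightarrow> mass s) (at_right 0)"
proof -
  have "((\<lambda>z. v s (Suc k) * exp (- real (Suc k) * z)) \<longlongrightarrow> v s (Suc k) * exp (- real (Suc k) * 0))
          (at_right 0)" for k
    by (intro tendsto_intros tendsto_within_subset[OF tendsto_ident_at]) auto
  then have lim: "((\<lambda>z. v s (Suc k) * exp (- real (Suc k) * z)) \<longlongrightarrow> v s (Suc k)) (at_right 0)" for k
    by simp
  have "norm (v s (Suc k) * exp (- real (Suc k) * z)) \<le> v s (Suc k)" if "z > 0" for k z
  proof -
    have "exp (- real (Suc k) * z) \<le> 1" using that by (intro exp_neg_of_nat_mult_le_1) simp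
    then show ?thesis using v_nonneg[OF s, of "Suc k"] by (simp add: abs_mult mult_left_le)
  qed
  then have "eventually (\<lambda>(k,z). norm (v s (Suc k) * exp (- real (Suc k) * z)) \<le> v s (Suc k))
               (at_top \<times>\<^sub>F at_right 0)"
    unfolding eventually_prod_filter
    by (intro exI[of _ "\<lambda>_. True"] exI[of _ "\<lambda>z. z > (0::real)"] conjI)
       (auto simp: eventually_at_right_less)
  from tannerys_theorem[OF lim this v_summable[OF s]] show ?thesis
    by (simp add: gen_def[abs_def] mass_suminf)
qed

lemma gen_less_mass:
  assumes s: "s \<ge> 0" and z: "z > 0"
  shows "gen s z < mass s"
proof -
  obtain i where "v s (Suc i) \<noteq> 0"
  proof (rule ccontr)
    assume "\<not> thesis"
    with that have "v s (Suc i) = 0" for i by blast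
    then have "mass s = 0" by (simp add: mass_suminf)
    with mass_pos[OF s] show False by simp
  qed
  with v_nonneg[OF s, of "Suc i"] have i: "v s (Suc i) > 0" by simp
  have exp_lt: "exp (- real (Suc k) * z) < 1" for k
    using z by (rule exp_neg_of_nat_mult_less_1)
  have "0 < (\<Sum>k. v s (Suc k) - v s (Suc k) * exp (- real (Suc k) * z))"
  proof (rule suminf_pos2[of _ i])
    show "summable (\<lambda>k. v s (Suc k) - v s (Suc k) * exp (- real (Suc k) * z))"
      by (intro summable_diff v_summable[OF s] gen_summable[OF s z])
    show "0 \<le> v s (Suc k) - v s (Suc k) * exp (- real (Suc k) * z)" for k
      using v_nonneg[OF s, of "Suc k"] exp_lt[of k] by (simp add: mult_left_le)
    show "0 < v s (Suc i) - v s (Suc i) * exp (- real (Suc i) * z)"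
      using i exp_lt[of i] by (simp add: mult_less_cancel_left1)
  qed
  also have "\<dots> = mass s - gen s z"
    unfolding mass_suminf gen_def by (rule suminf_diff[OF v_summable[OF s] gen_summable[OF s z], symmetric])
  finally show ?thesis by simp
qed

definition supp0 :: "nat set" where
  "supp0 = {k. v 0 (Suc k) \<noteq> 0}"

lemma finite_supp0: "finite supp0"
proof -
  have "finite {k. k \<ge> 1 \<and> v 0 k \<noteq> 0}" using finite_support by (simp add: in_Nstar_def)
  then have "finite (Suc -` {k. k \<ge> 1 \<and> v 0 k \<noteq> 0})" by (rule finite_vimageI) simp
  moreover have "supp0 = Suc -` {k. k \<ge> 1 \<and> v 0 k \<noteq> 0}" by (auto simp: supp0_def)
  ultimately show ?thesis by simp
qed

lemma supp0_pos: obtains i where "i \<in> supp0" "v 0 (Suc i) > 0"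
proof -
  obtain k where k: "k \<ge> 1" "v 0 k \<noteq> 0" using nontrivial by auto
  then obtain i where "k = Suc i" by (cases k) auto
  with k v_nonneg[of 0 k] have "i \<in> supp0" "v 0 (Suc i) > 0" by (auto simp: supp0_def)
  then show ?thesis by (rule that)
qed

lemma gen0_eq_sum: "gen 0 z = (\<Sum>k\<in>supp0. v 0 (Suc k) * exp (- real (Suc k) * z))"
  unfolding gen_def by (rule suminf_finite[OF finite_supp0]) (auto simp: supp0_def)

lemma wgen0_eq_sum: "wgen 0 z = (\<Sum>k\<in>supp0. real (Suc k) * v 0 (Suc k) * exp (- real (Suc k) * z))"
  unfolding wgen_def by (rule suminf_finite[OF finite_supp0]) (auto simp: supp0_def)

lemma M_eq_sum: "M = (\<Sum>k\<in>supp0. v 0 (Suc k))"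
  unfolding mass_suminf by (rule suminf_finite[OF finite_supp0]) (auto simp: supp0_def)

lemma gen0_at_0: "gen 0 0 = M"
  by (simp add: gen0_eq_sum M_eq_sum)

lemma gen0_nonneg: "0 \<le> gen 0 z"
  unfolding gen0_eq_sum by (rule sum_nonneg) (use v_nonneg[of 0] in auto)

lemma gen0_le: 
  assumes "X \<ge> 0" 
  shows "gen 0 X \<le> M * exp (- X)"
  unfolding gen0_eq_sum M_eq_sum sum_distrib_right
proof (rule sum_mono)
  fix k
  have "exp (- real (Suc k) * X) \<le> exp (- X)" using assms by (simp add: algebra_simps)
  then show "v 0 (Suc k) * exp (- real (Suc k) * X) \<le> v 0 (Suc k) * exp (- X)"
    using v_nonneg[of 0 "Suc k"] by (intro mult_left_mono) auto
qed

lemma gen0_continuous: "continuous_on A (gen 0)"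
  unfolding gen0_eq_sum[abs_def] by (intro continuous_intros)

lemma gen0_derivative: "(gen 0 has_real_derivative - wgen 0 z) (at z)"
proof -
  have "((\<lambda>z. \<Sum>k\<in>supp0. v 0 (Suc k) * exp (- real (Suc k) * z)) has_real_derivative
          (\<Sum>k\<in>supp0. v 0 (Suc k) * (exp (- real (Suc k) * z) * (- real (Suc k))))) (at z)"
    by (rule DERIV_sum) (rule derivative_eq_intros refl | simp)+
  then show ?thesis
    unfolding gen0_eq_sum[abs_def] wgen0_eq_sum
    by (simp add: sum_negf[symmetric] algebra_simps)
qed

lemma wgen0_pos: "wgen 0 z > 0"
proof -
  obtain i where i: "i \<in> supp0" "v 0 (Suc i) > 0" by (rule supp0_pos)
  show ?thesis
    unfolding wgen0_eq_sum using i v_nonneg[of 0]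
    by (intro sum_pos2[OF finite_supp0 i(1)]) auto
qed

lemma gen0_strict_antimono: "a < b \<Longrightarrow> gen 0 b < gen 0 a"
  using DERIV_neg_imp_decreasing[of a b "gen 0"] gen0_derivative wgen0_pos
  by (metis neg_less_0_iff_less)

lemma wgen0_strict_antimono:
  assumes "a < b"
  shows "wgen 0 b < wgen 0 a"
proof -
  obtain i where i: "i \<in> supp0" "v 0 (Suc i) > 0" by (rule supp0_pos)
  have lt: "exp (- real (Suc k) * b) < exp (- real (Suc k) * a)" for k
    using assms by simp
  show ?thesis
    unfolding wgen0_eq_sum
  proof (rule sum_strict_mono_ex1[OF finite_supp0])
    show "\<forall>k\<in>supp0. real (Suc k) * v 0 (Suc k) * exp (- real (Suc k) * b)
               \<le> real (Suc k) * v 0 (Suc k) * exp (- real (Suc k) * a)"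
    proof
      fix k
      show "real (Suc k) * v 0 (Suc k) * exp (- real (Suc k) * b)
              \<le> real (Suc k) * v 0 (Suc k) * exp (- real (Suc k) * a)"
        using v_nonneg[of 0 "Suc k"] by (intro mult_left_mono less_imp_le[OF lt]) auto
    qed
    show "\<exists>k\<in>supp0. real (Suc k) * v 0 (Suc k) * exp (- real (Suc k) * b)
               < real (Suc k) * v 0 (Suc k) * exp (- real (Suc k) * a)"
      using i lt[of i] by (intro bexI[of _ i]) auto
  qed
qed


text \<open>The characteristic of \<open>\<partial>\<^sub>t gen + (gen - mass) \<partial>\<^sub>z gen = 0\<close> issued from \<open>z = x\<close>.\<close>
definition charac :: "real \<Rightarrow> real \<Rightarrow> real" where
  "charac x s = x + s * gen 0 x - cum_mass s"

lemma charac_0 [simp]: "charac x 0 = x"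
  by (simp add: charac_def)

lemma charac_continuous: "continuous_on {0..} (charac x)"
  unfolding charac_def[abs_def] by (intro continuous_intros cum_mass_continuous)

lemma isCont_charac:
  assumes "0 < s"
  shows "isCont (charac x) s"
proof -
  have "continuous_on {0<..} (charac x)"
    by (rule continuous_on_subset[OF charac_continuous]) auto
  then show ?thesis using assms by (simp add: continuous_on_eq_continuous_at)
qed

lemma isCont_charac_start: "isCont (\<lambda>x. charac x s) x"
  unfolding charac_def using gen0_continuous[of UNIV]
  by (intro continuous_intros) (simp add: continuous_on_eq_continuous_at)

lemma charac_diff_abs_le:
  assumes "0 \<le> s" "s \<le> h"
  shows "\<bar>charac x h - charac x s\<bar> \<le> (gen 0 x + M) * (h - s)"
proof -
  have "charac x h - charac x s = (h - s) * gen 0 x - (cum_mass h - cum_mass s)"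
    by (simp add: charac_def algebra_simps)
  moreover have "0 \<le> (h - s) * gen 0 x" using assms gen0_nonneg by simp
  ultimately show ?thesis
    using cum_mass_diff_le[OF assms] by (simp add: abs_le_iff algebra_simps)
qed

lemma charac_right_derivative:
  "0 \<le> s \<Longrightarrow> (charac x has_real_derivative gen 0 x - mass_right s) (at_right s)"
  unfolding charac_def[abs_def]
  by (rule derivative_eq_intros cum_mass_right_derivative refl | simp)+

lemma gen_along_charac:
  assumes t: "0 \<le> t" and pos: "\<And>s. s \<in> {0..t} \<Longrightarrow> 0 < charac x s"
  shows "gen t (charac x t) = gen 0 x"
proof -
  have cont: "continuous_on {0..t} (charac x)"
    by (rule continuous_on_subset[OF charac_continuous]) auto
  obtain s0 where s0: "s0 \<in> {0..t}" "\<And>s. s \<in> {0..t} \<Longrightarrow> charac x s0 \<le> charac x s"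
    using continuous_attains_inf[OF compact_Icc _ cont] t by auto
  define eta where "eta = charac x s0"
  have eta: "0 < eta" "\<And>s. s \<in> {0..t} \<Longrightarrow> eta \<le> charac x s"
    using pos s0 by (auto simp: eta_def)
  show ?thesis
  proof (rule linear_right_ode_stays_at_equilibrium[where Q = "\<lambda>s. gen s (charac x s)"
        and D = "\<lambda>s. wgen s (charac x s)" and B = "M * (\<Sum>k. real (Suc k) ^ 2 * exp (- eta) ^ Suc k)"])
    show "continuous_on {0..t} (\<lambda>s. gen s (charac x s))"
      by (rule gen_along_path_continuous[OF cont _ eta]) simp
    fix s assume s: "s \<in> {0..<t}"
    have "((\<lambda>h. gen h (charac x h)) has_real_derivative wgen s (charac x s) *
            (gen s (charac x s) - mass_right s - (gen 0 x - mass_right s))) (at_right s)"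
      using s eta by (intro gen_along_path_right_derivative[where t = t and eta = eta and L = "gen 0 x + M"]
          charac_diff_abs_le charac_right_derivative) auto
    then show "((\<lambda>h. gen h (charac x h)) has_real_derivative
                 wgen s (charac x s) * (gen s (charac x s) - gen 0 x)) (at_right s)"
      by simp
    show "wgen s (charac x s) \<le> M * (\<Sum>k. real (Suc k) ^ 2 * exp (- eta) ^ Suc k)"
      using s eta by (intro wgen_le) auto
  qed (use t in auto)
qed

lemma charac_antimono:
  assumes "0 \<le> a" "a \<le> b" "gen 0 x \<le> mass b"
  shows "charac x b \<le> charac x a"
proof -
  have "(b - a) * gen 0 x \<le> (b - a) * mass b" using assms by (intro mult_left_mono) auto
  then show ?thesis
    using cum_mass_diff_bounds(1)[OF assms(1,2)] by (simp add: charac_def algebra_simps)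
qed

lemma charac_mono:
  assumes "0 \<le> a" "a \<le> b" "mass a \<le> gen 0 x"
  shows "charac x a \<le> charac x b"
proof -
  have "(b - a) * mass a \<le> (b - a) * gen 0 x" using assms by (intro mult_left_mono) auto
  then show ?thesis
    using cum_mass_diff_bounds(2)[OF assms(1,2)] by (simp add: charac_def algebra_simps)
qed

lemma charac_nonpos_at_level:
  assumes t: "t \<ge> 0" and level: "gen 0 x = mass t"
  shows "charac x t \<le> 0"
proof (rule ccontr)
  assume "\<not> ?thesis"
  then have pos: "0 < charac x t" by simp
  have "0 < charac x s" if "s \<in> {0..t}" for s
    using pos charac_antimono[of s t x] level that by simp
  then have "gen t (charac x t) = mass t"
    using gen_along_charac[OF t] level by simp
  with gen_less_mass[OF t pos] show False by simp
qed

lemma charac_pos_if_start_large: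
  assumes "0 \<le> r" "r \<le> s" "s * M < x"
  shows "0 < charac x r"
proof -
  have "cum_mass r \<le> M * r" using cum_mass_diff_le(2)[of 0 r] assms by simp
  also have "\<dots> \<le> s * M" using assms M_pos by (simp add: mult.commute)
  moreover have "0 \<le> r * gen 0 x" using assms(1) gen0_nonneg[of x] by simp
  ultimately show ?thesis using assms(3) by (simp add: charac_def)
qed


lemma mass_eq_gen0_at_boundary:
  assumes ss: "0 \<le> ss" and zero: "charac xs ss = 0"
    and beyond: "\<And>x' r. xs < x' \<Longrightarrow> r \<in> {0..ss} \<Longrightarrow> 0 < charac x' r"
  shows "mass ss = gen 0 xs"
proof -
  have "((\<lambda>x'. charac x' ss) \<longlongrightarrow> 0) (at_right xs)"
    using isCont_charac_start[of xs ss] zero by (auto simp: isCont_def intro: tendsto_within_subset)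
  moreover have "\<forall>\<^sub>F x' in at_right xs. 0 < charac x' ss"
    using eventually_at_right_less[of xs] by eventually_elim (use beyond ss in auto)
  ultimately have "filterlim (\<lambda>x'. charac x' ss) (at_right 0) (at_right xs)"
    by (rule tendsto_imp_filterlim_at_right)
  from filterlim_compose[OF gen_tendsto_mass[OF ss] this]
  have "((\<lambda>x'. gen ss (charac x' ss)) \<longlongrightarrow> mass ss) (at_right xs)" .
  moreover have "\<forall>\<^sub>F x' in at_right xs. gen ss (charac x' ss) = gen 0 x'"
    using eventually_at_right_less[of xs]
    by eventually_elim (use beyond ss in \<open>auto intro!: gen_along_charac\<close>)
  ultimately have "(gen 0 \<longlongrightarrow> mass ss) (at_right xs)"
    using tendsto_cong by fastforce
  moreover have "(gen 0 \<longlongrightarrow> gen 0 xs) (at_right xs)"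
    using gen0_continuous[of UNIV]
    by (auto simp: continuous_on_eq_continuous_at isCont_def intro: tendsto_within_subset)
  ultimately show ?thesis
    using tendsto_unique trivial_limit_at_right_real by blast
qed

lemma continuous_on_charac_joint:
  "continuous_on (UNIV \<times> {0..}) (\<lambda>p. charac (fst p) (snd p))"
proof -
  have "continuous_on (UNIV \<times> {0..}) (\<lambda>p. gen 0 (fst p))"
    by (rule continuous_on_compose2[OF gen0_continuous[of UNIV]]) (auto intro: continuous_intros)
  moreover have "continuous_on (UNIV \<times> {0..}) (\<lambda>p. cum_mass (snd p))"
    by (rule continuous_on_compose2[OF cum_mass_continuous]) (auto intro: continuous_intros)
  ultimately show ?thesis
    unfolding charac_def by (intro continuous_intros)
qed

lemma compact_charac_nonpos:
  assumes "0 \<le> s"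
  shows "compact (({a..b} \<times> {0..s}) \<inter> (\<lambda>p. charac (fst p) (snd p)) -` {..0})"
proof -
  have "closed (({a..b} \<times> {0..s}) \<inter> (\<lambda>p. charac (fst p) (snd p)) -` {..0})"
    using assms by (intro continuous_closed_preimage closed_Times closed_atMost
        continuous_on_subset[OF continuous_on_charac_joint]) auto
  from compact_Int_closed[OF compact_Times[OF compact_Icc[of a b] compact_Icc[of 0 s]] this]
  show ?thesis by (simp add: Int_left_absorb)
qed

text \<open>The last start point \<open>xs\<close> whose characteristic reaches \<open>z \<le> 0\<close> before time \<open>s\<close>.\<close>
lemma charac_neg_boundary:
  assumes s: "0 \<le> s" and x: "0 \<le> x" and neg: "charac x s < 0"
  obtains xs ss where "x < xs" "ss \<in> {0..s}" "charac xs ss = 0"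
    "\<And>r. r \<in> {0..s} \<Longrightarrow> 0 \<le> charac xs r"
    "\<And>x' r. xs < x' \<Longrightarrow> r \<in> {0..s} \<Longrightarrow> 0 < charac x' r"
proof -
  define X where "X = s * M + 1 + x"
  define K where "K = ({x..X} \<times> {0..s}) \<inter> (\<lambda>p. charac (fst p) (snd p)) -` {..0}"
  have "compact (fst ` K)"
    unfolding K_def using compact_charac_nonpos[OF s]
    by (rule compact_continuous_image[OF continuous_on_fst[OF continuous_on_id]])
  moreover have "(x, s) \<in> K" using neg s x M_pos by (auto simp: K_def X_def)
  then have "fst ` K \<noteq> {}" by blast
  ultimately obtain xs where "xs \<in> fst ` K" and max: "\<forall>x'\<in>fst ` K. x' \<le> xs"
    using compact_attains_sup by blast
  then obtain ss where p: "(xs, ss) \<in> K" by force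
  have beyond: "0 < charac x' r" if "xs < x'" "r \<in> {0..s}" for x' r
  proof (cases "x' \<le> X")
    case True
    show ?thesis
    proof (rule ccontr)
      assume "\<not> ?thesis"
      then have "(x', r) \<in> K" using True that p by (auto simp: K_def)
      with max that(1) show False by force
    qed
  qed (use that x charac_pos_if_start_large[of r s x'] in \<open>auto simp: X_def\<close>)
  have limit: "0 \<le> charac xs r" if "r \<in> {0..s}" for r
  proof (rule tendsto_lowerbound)
    show "((\<lambda>x'. charac x' r) \<longlongrightarrow> charac xs r) (at_right xs)"
      using isCont_charac_start[of xs r] by (auto simp: isCont_def intro: tendsto_within_subset)
    show "\<forall>\<^sub>F x' in at_right xs. 0 \<le> charac x' r"
      using eventually_at_right_less[of xs] by eventually_elim (use beyond that in fastforce)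
  qed simp
  have box: "x \<le> xs" "ss \<in> {0..s}" "charac xs ss \<le> 0"
    using p by (auto simp: K_def)
  have "xs \<noteq> x" using limit[of s] neg s by auto
  with box(1) have "x < xs" by simp
  moreover have "charac xs ss = 0" using limit[OF box(2)] box(3) by simp
  ultimately show ?thesis by (rule that[OF _ box(2) _ limit beyond])
qed

lemma exists_charac_neg_below_level:
  assumes s: "0 \<le> s" and x: "0 \<le> x" and neg: "charac x s < 0"
  obtains s' where "s' \<in> {0..s}" "charac x s' < 0" "mass s' < gen 0 x"
proof -
  obtain xs ss where xs: "x < xs" "ss \<in> {0..s}" "charac xs ss = 0"
    and nonneg: "\<And>r. r \<in> {0..s} \<Longrightarrow> 0 \<le> charac xs r"
    and beyond: "\<And>x' r. xs < x' \<Longrightarrow> r \<in> {0..s} \<Longrightarrow> 0 < charac x' r"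
    using charac_neg_boundary[OF s x neg] by blast
  have level: "mass ss = gen 0 xs"
    using xs beyond by (intro mass_eq_gen0_at_boundary) auto
  have lower: "gen 0 xs < gen 0 x" using gen0_strict_antimono[OF xs(1)] .
  \<comment> \<open>The gap between the two characteristics shrinks linearly in time and is still positive at \<open>s\<close>.\<close>
  have gap: "charac xs r - charac x r = (xs - x) + r * (gen 0 xs - gen 0 x)" for r
    by (simp add: charac_def algebra_simps)
  have "s * (gen 0 xs - gen 0 x) \<le> ss * (gen 0 xs - gen 0 x)"
    using xs(2) lower by (intro mult_right_mono_neg) auto
  then have "charac x ss < 0"
    using gap[of s] gap[of ss] xs(3) nonneg[of s] s neg by auto
  with xs(2) level lower show ?thesis using that by auto
qed

lemma exists_charac_neg_left:
  assumes "0 < s" "charac x s < 0"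
  obtains r where "r \<in> {0<..<s}" "charac x r < 0"
proof -
  have "(charac x \<longlongrightarrow> charac x s) (at_left s)"
    using isCont_charac[OF assms(1)] by (auto simp: isCont_def intro: tendsto_within_subset)
  from order_tendstoD(2)[OF this assms(2)] eventually_at_left_real[OF assms(1)]
  have "\<forall>\<^sub>F r in at_left s. charac x r < 0 \<and> r \<in> {0<..<s}"
    by (rule eventually_conj)
  then show ?thesis
    using that eventually_happens trivial_limit_at_left_real by blast
qed

lemma charac_nonneg:
  assumes x: "0 \<le> x" and t: "0 \<le> t"
  shows "0 \<le> charac x t"
proof (rule ccontr)
  assume "\<not> ?thesis"
  then have neg_t: "charac x t < 0" by simp
  define S where "S = {r \<in> {0..t}. charac x r < 0 \<and> mass r < gen 0 x}"
  obtain s1 where s1: "s1 \<in> S"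
    using exists_charac_neg_below_level[OF t x neg_t] by (auto simp: S_def)
  have bdd: "bdd_below S" by (auto simp: S_def bdd_below_def)
  define sig where "sig = Inf S"
  have sig: "0 \<le> sig" "sig \<le> s1"
  proof -
    show "0 \<le> sig" unfolding sig_def using s1 by (intro cInf_greatest) (auto simp: S_def)
    show "sig \<le> s1" unfolding sig_def by (rule cInf_lower[OF s1 bdd])
  qed
  have below_level: "mass r < gen 0 x" if gt: "sig < r" for r
  proof -
    obtain s2 where "s2 \<in> S" "s2 < r"
      using gt cInf_less_iff[of S r] s1 bdd by (auto simp: sig_def)
    then show ?thesis using mass_antimono[of s2 r] by (auto simp: S_def)
  qed
  \<comment> \<open>After \<open>sig\<close> the characteristic is nondecreasing, so it is already negative at \<open>sig\<close>,
    and by left continuity \<open>S\<close> would have an element below \<open>sig\<close>.\<close>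
  have "charac x sig \<le> charac x s1"
  proof (cases "sig = s1")
    case False
    with sig have lt: "sig < s1" by simp
    show ?thesis
    proof (rule tendsto_upperbound)
      show "(charac x \<longlongrightarrow> charac x sig) (at_right sig)"
        using charac_continuous[of x] sig
        by (auto simp: continuous_on_def intro: tendsto_within_subset)
      show "\<forall>\<^sub>F r in at_right sig. charac x r \<le> charac x s1"
        using eventually_at_right_real[OF lt]
      proof eventually_elim
        case (elim r)
        then show ?case using sig below_level[of r] by (intro charac_mono) auto
      qed
    qed simp
  qed simp
  with s1 have neg: "charac x sig < 0" by (simp add: S_def)
  with x sig(1) have "0 < sig" by (cases "sig = 0") auto
  then obtain r where r: "r \<in> {0<..<sig}" "charac x r < 0"
    using exists_charac_neg_left neg by blast
  obtain s' where "s' \<in> {0..r}" "charac x s' < 0" "mass s' < gen 0 x"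
    using exists_charac_neg_below_level[of r x] r x by auto
  then have "s' \<in> S" "s' < sig" using r sig s1 by (auto simp: S_def)
  moreover have "sig \<le> s'" unfolding sig_def by (rule cInf_lower[OF \<open>s' \<in> S\<close> bdd])
  ultimately show False by simp
qed


lemma exists_start_at_level:
  assumes t: "t \<ge> 0"
  obtains x where "0 \<le> x" "gen 0 x = mass t"
proof -
  define X where "X = ln (M / mass t)"
  have mt: "0 < mass t" "mass t \<le> M" using mass_pos[OF t] mass_le_M[OF t] by auto
  then have X: "X \<ge> 0" by (simp add: X_def)
  have "gen 0 X \<le> M * exp (- X)" by (rule gen0_le[OF X])
  also have "\<dots> = mass t" using mt M_pos by (simp add: X_def exp_minus exp_ln)
  finally have "gen 0 X \<le> mass t" .
  moreover have "mass t \<le> gen 0 0" using mt gen0_at_0 by simp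
  ultimately obtain x where "0 \<le> x" "x \<le> X" "gen 0 x = mass t"
    using IVT2'[of "gen 0" X "mass t" 0] X gen0_continuous by blast
  then show ?thesis using that by blast
qed

lemma cum_mass_eq_min:
  assumes T: "0 \<le> T"
  obtains x0 where "0 \<le> x0" "gen 0 x0 = mass T" "cum_mass T = x0 + T * gen 0 x0"
    "\<And>x. 0 \<le> x \<Longrightarrow> x0 + T * gen 0 x0 \<le> x + T * gen 0 x"
proof -
  obtain x0 where x0: "0 \<le> x0" "gen 0 x0 = mass T"
    using exists_start_at_level[OF T] by blast
  have "charac x0 T = 0"
    using charac_nonpos_at_level[OF T x0(2)] charac_nonneg[OF x0(1) T] by simp
  then have "cum_mass T = x0 + T * gen 0 x0" by (simp add: charac_def)
  moreover have "cum_mass T \<le> x + T * gen 0 x" if "0 \<le> x" for x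
    using charac_nonneg[OF that T] by (simp add: charac_def)
  ultimately show ?thesis using that x0 by auto
qed

lemma m1_eq_wgen0: "m1 (v 0) = wgen 0 0"
  by (simp add: m1_def wgen_def)

lemma winv_eq:
  assumes "T = inverse (wgen 0 x)"
  shows "winv (v 0) T = x"
  unfolding winv_def
proof (rule the_equality)
  have wfun: "wfun (v 0) = (\<lambda>x. inverse (wgen 0 x))"
    by (simp add: wfun_def wgen_def fun_eq_iff)
  show "wfun (v 0) x = T" using assms by (simp add: wfun)
  fix y assume "wfun (v 0) y = T"
  then have "wgen 0 y = wgen 0 x" using assms wgen0_pos[of x] wgen0_pos[of y] by (simp add: wfun)
  then show "y = x"
    using wgen0_strict_antimono[of x y] wgen0_strict_antimono[of y x] by (cases x y rule: linorder_cases) auto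
qed

lemma F0_eq: "F0 (v 0) T = M - gen 0 (winv (v 0) T)"
proof -
  have "(\<Sum>k. v 0 (Suc k) * (1 - exp (- real (Suc k) * z))) = M - gen 0 z" for z
  proof -
    have "summable (\<lambda>k. v 0 (Suc k) * exp (- real (Suc k) * z))"
      by (rule summable_finite[OF finite_supp0]) (auto simp: supp0_def)
    from suminf_diff[OF v_summable[of 0] this] show ?thesis
      unfolding mass_suminf gen_def right_diff_distrib mult_1_right by simp
  qed
  then show ?thesis by (simp add: F0_def Let_def)
qed

lemma minimizer_first_order:
  assumes T: "0 \<le> T" and x0: "0 \<le> x0" and min: "\<And>x. 0 \<le> x \<Longrightarrow> x0 + T * gen 0 x0 \<le> x + T * gen 0 x"
  shows "x0 = 0 \<Longrightarrow> T * wgen 0 0 \<le> 1" and "0 < x0 \<Longrightarrow> T * wgen 0 x0 = 1"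
proof -
  define h where "h x = x + T * gen 0 x" for x
  have deriv: "(h has_real_derivative (1 - T * wgen 0 x)) (at x)" for x
    unfolding h_def by (rule derivative_eq_intros gen0_derivative refl | simp)+
  show "T * wgen 0 0 \<le> 1" if "x0 = 0"
  proof (rule ccontr)
    assume "\<not> ?thesis"
    then obtain d where "d > 0" "\<And>e. e > 0 \<Longrightarrow> e < d \<Longrightarrow> h (0 + e) < h 0"
      using DERIV_neg_dec_right[OF deriv[of 0]] by auto
    then have "h (d/2) < h 0" by simp
    with min[of "d/2"] \<open>d > 0\<close> that show False by (simp add: h_def)
  qed
  show "T * wgen 0 x0 = 1" if "0 < x0"
  proof -
    have "1 - T * wgen 0 x0 = 0"
      by (rule DERIV_local_min[OF deriv that]) (use min in \<open>auto simp: h_def\<close>)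
    then show ?thesis by simp
  qed
qed

lemma mass_cum_mass_closed_form:
  assumes T: "0 \<le> T"
  shows "T \<le> 1 / m1 (v 0) \<Longrightarrow> mass T = M \<and> cum_mass T = T * M"
    and "1 / m1 (v 0) \<le> T \<Longrightarrow> M - mass T = F0 (v 0) T \<and> T * M - cum_mass T = G0 (v 0) T"
proof -
  obtain x0 where x0: "0 \<le> x0" "gen 0 x0 = mass T" "cum_mass T = x0 + T * gen 0 x0"
    and min: "\<And>x. 0 \<le> x \<Longrightarrow> x0 + T * gen 0 x0 \<le> x + T * gen 0 x"
    using cum_mass_eq_min[OF T] by blast
  have m1: "m1 (v 0) = wgen 0 0" "0 < wgen 0 0" using m1_eq_wgen0 wgen0_pos by auto
  show "mass T = M \<and> cum_mass T = T * M" if before: "T \<le> 1 / m1 (v 0)"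
  proof -
    have "x0 = 0"
    proof (rule ccontr)
      assume "x0 \<noteq> 0"
      with x0(1) have "0 < x0" by simp
      then have "T * wgen 0 x0 = 1" using minimizer_first_order(2)[OF T x0(1) min] by blast
      moreover have "T * wgen 0 x0 < T * wgen 0 0"
        using \<open>T * wgen 0 x0 = 1\<close> wgen0_strict_antimono[OF \<open>0 < x0\<close>] T
        by (intro mult_strict_left_mono) (auto simp: order_le_less)
      ultimately show False using before m1 by (simp add: field_simps)
    qed
    then show ?thesis using x0 by (simp add: gen0_at_0)
  qed
  show "M - mass T = F0 (v 0) T \<and> T * M - cum_mass T = G0 (v 0) T" if after: "1 / m1 (v 0) \<le> T"
  proof -
    have "T * wgen 0 x0 = 1"
    proof (cases "x0 = 0")
      case True
      then show ?thesis
        using minimizer_first_order(1)[OF T x0(1) min] after m1 by (simp add: field_simps)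
    next
      case False
      with x0(1) have "0 < x0" by simp
      then show ?thesis using minimizer_first_order(2)[OF T x0(1) min] by blast
    qed
    then have "winv (v 0) T = x0"
      using wgen0_pos[of x0] by (intro winv_eq) (simp add: field_simps)
    then show ?thesis using x0 by (simp add: F0_eq G0_def algebra_simps)
  qed
qed

lemma Phi_has_integral:
  assumes "T \<ge> 0"
  shows "((\<lambda>t. M - mass t) has_integral (T * M - cum_mass T)) {0..T}"
  using has_integral_diff[OF has_integral_const_real[of M 0 T] integrable_integral[OF mass_integrable[of 0 T]]]
    assms by (simp add: cum_mass_def mult.commute)

end

theorem lemma5:
  fixes v :: "real \<Rightarrow> nat \<Rightarrow> real" and T :: real
  assumes "in_Nstar (v 0)"
    and "\<exists>k\<ge>1. v 0 k \<noteq> 0"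
    and "critical_solution v"
    and "T \<ge> 0"
  shows "(T \<le> 1 / m1 (v 0) \<longrightarrow> m0 (v 0) - m0 (v T) = 0 \<and>
            ((\<lambda>t. m0 (v 0) - m0 (v t)) has_integral 0) {0..T})
       \<and> (T \<ge> 1 / m1 (v 0) \<longrightarrow> m0 (v 0) - m0 (v T) = F0 (v 0) T \<and>
            ((\<lambda>t. m0 (v 0) - m0 (v t)) has_integral G0 (v 0) T) {0..T})"
proof -
  interpret critical_flow v using assms(1-3) by unfold_locales
  show ?thesis
    using mass_cum_mass_closed_form[OF assms(4)] Phi_has_integral[OF assms(4)] by auto
qed

end
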